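(* Let $(M,F)$ be a $P$-reducible Finsler space of dimension $n$, i.e. $P_{ijk}=\frac1{n+1}(h_{ij}P_k+h_{jk}P_i+h_{ki}P_j)$ with $P_i=P^r_{ir}$, admitting a semi-concurrent vector field $B^i(x)$. If $B^2F^2-B_0^2\neq0$, where $B^2=g_{ij}B^iB^j$ and $B_0=g_{ij}B^iy^j$, then $P_k=0$ and $(M,F)$ is a Landsberg space.
   Context: $(M,F)$ is a Finsler manifold with metric $g_{ij}=\frac12\dot\partial_i\dot\partial_jF^2$, $l_i=\dot\partial_iF$, angular metric $h_{ij}=g_{ij}-l_il_j$, Cartan tensor $C_{ijk}=\frac12\dot\partial_kg_{ij}$. $P_{ijk}$ is the ($hv$-)torsion tensor (Landsberg tensor) $P_{ijk}=C_{ijk|0}$ of the Cartan connection, with $P^r_{ir}=g^{rs}P_{sir}$. A Landsberg space is one with $P_{ijk}\equiv0$. A vector field $B^i(x)$ on $M$ is semi-concurrent if $B^hC_{hij}=0$. *)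

theory Defs
  imports "HOL-Analysis.Analysis"
begin

text \<open>A point of the slit tangent bundle over a
coordinate domain U is a pair z = (x, y) with x in U and y nonzero.
Indices range over the finite type 'n, and the dimension is n = CARD('n).\<close>

definition dirderiv :: "'a::real_normed_vector \<Rightarrow> ('a \<Rightarrow> real) \<Rightarrow> 'a \<Rightarrow> real" where
  "dirderiv v f z = deriv (\<lambda>t. f (z + t *\<^sub>R v)) 0"

definition smooth_on :: "'a::real_normed_vector set \<Rightarrow> ('a \<Rightarrow> real) \<Rightarrow> bool" where
  "smooth_on D f \<longleftrightarrow>
     (\<forall>vs. continuous_on D (foldr dirderiv vs f) \<and>
        (\<forall>v. \<forall>z\<in>D. ((\<lambda>t. foldr dirderiv vs f (z + t *\<^sub>R v))
                    has_real_derivative dirderiv v (foldr dirderiv vs f) z) (at 0)))"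

definition dX :: "'n::finite \<Rightarrow> ((real^'n) \<times> (real^'n) \<Rightarrow> real) \<Rightarrow> (real^'n) \<times> (real^'n) \<Rightarrow> real" where
  "dX i f = dirderiv (axis i 1, 0) f"

definition dY :: "'n::finite \<Rightarrow> ((real^'n) \<times> (real^'n) \<Rightarrow> real) \<Rightarrow> (real^'n) \<times> (real^'n) \<Rightarrow> real" where
  "dY i f = dirderiv (0, axis i 1) f"

definition TU0 :: "(real^'n::finite) set \<Rightarrow> ((real^'n) \<times> (real^'n)) set" where
  "TU0 U = U \<times> (UNIV - {0})"

type_synonym 'n fn = "(real^'n) \<times> (real^'n) \<Rightarrow> real"

definition Fsq :: "'n::finite fn \<Rightarrow> 'n fn" where
  "Fsq F = (\<lambda>z. (F z)\<^sup>2)"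

definition gt :: "'n::finite fn \<Rightarrow> 'n \<Rightarrow> 'n \<Rightarrow> 'n fn" where
  "gt F i j z = dY i (dY j (Fsq F)) z / 2"

definition lt :: "'n::finite fn \<Rightarrow> 'n \<Rightarrow> 'n fn" where
  "lt F i = dY i F"

definition ht :: "'n::finite fn \<Rightarrow> 'n \<Rightarrow> 'n \<Rightarrow> 'n fn" where
  "ht F i j z = gt F i j z - lt F i z * lt F j z"

definition Ct :: "'n::finite fn \<Rightarrow> 'n \<Rightarrow> 'n \<Rightarrow> 'n \<Rightarrow> 'n fn" where
  "Ct F i j k z = dY k (gt F i j) z / 2"

definition ginv :: "'n::finite fn \<Rightarrow> 'n \<Rightarrow> 'n \<Rightarrow> 'n fn" where
  "ginv F i j z = matrix_inv (\<chi> a b. gt F a b z) $ i $ j"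

definition Gs :: "'n::finite fn \<Rightarrow> 'n \<Rightarrow> 'n fn" where
  "Gs F i z = (\<Sum>l\<in>UNIV. ginv F i l z *
      ((\<Sum>k\<in>UNIV. snd z $ k * dY l (dX k (Fsq F)) z) - dX l (Fsq F) z)) / 4"

definition Nt :: "'n::finite fn \<Rightarrow> 'n \<Rightarrow> 'n \<Rightarrow> 'n fn" where
  "Nt F i j = dY j (Gs F i)"

definition delta :: "'n::finite fn \<Rightarrow> 'n \<Rightarrow> 'n fn \<Rightarrow> 'n fn" where
  "delta F j f z = dX j f z - (\<Sum>r\<in>UNIV. Nt F r j z * dY r f z)"

definition cartanF :: "'n::finite fn \<Rightarrow> 'n \<Rightarrow> 'n \<Rightarrow> 'n \<Rightarrow> 'n fn" where
  "cartanF F i j k z = (\<Sum>r\<in>UNIV. ginv F i r z *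
      (delta F j (gt F r k) z + delta F k (gt F r j) z - delta F r (gt F j k) z)) / 2"

definition Chd :: "'n::finite fn \<Rightarrow> 'n \<Rightarrow> 'n \<Rightarrow> 'n \<Rightarrow> 'n \<Rightarrow> 'n fn" where
  "Chd F i j k l z = delta F l (Ct F i j k) z
     - (\<Sum>r\<in>UNIV. Ct F r j k z * cartanF F r i l z + Ct F i r k z * cartanF F r j l z
                  + Ct F i j r z * cartanF F r k l z)"

definition Pt :: "'n::finite fn \<Rightarrow> 'n \<Rightarrow> 'n \<Rightarrow> 'n \<Rightarrow> 'n fn" where
  "Pt F i j k z = (\<Sum>l\<in>UNIV. snd z $ l * Chd F i j k l z)"

definition Pv :: "'n::finite fn \<Rightarrow> 'n \<Rightarrow> 'n fn" where
  "Pv F i z = (\<Sum>r\<in>UNIV. \<Sum>s\<in>UNIV. ginv F r s z * Pt F s i r z)"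

definition finsler :: "(real^'n::finite) set \<Rightarrow> 'n fn \<Rightarrow> bool" where
  "finsler U F \<longleftrightarrow> open U \<and> smooth_on (TU0 U) F
     \<and> (\<forall>z\<in>TU0 U. F z > 0)
     \<and> (\<forall>x\<in>U. \<forall>y. \<forall>c::real. y \<noteq> 0 \<longrightarrow> c > 0 \<longrightarrow> F (x, c *\<^sub>R y) = c * F (x, y))
     \<and> (\<forall>z\<in>TU0 U. \<forall>v::real^'n. v \<noteq> 0 \<longrightarrow>
           (\<Sum>i\<in>UNIV. \<Sum>j\<in>UNIV. gt F i j z * v $ i * v $ j) > 0)"

definition P_reducible :: "(real^'n::finite) set \<Rightarrow> 'n fn \<Rightarrow> bool" where
  "P_reducible U F \<longleftrightarrow> (\<forall>z\<in>TU0 U. \<forall>i j k.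
     Pt F i j k z = (ht F i j z * Pv F k z + ht F j k z * Pv F i z + ht F k i z * Pv F j z)
                    / (real CARD('n) + 1))"

definition semi_concurrent :: "(real^'n::finite) set \<Rightarrow> 'n fn \<Rightarrow> (real^'n \<Rightarrow> real^'n) \<Rightarrow> bool" where
  "semi_concurrent U F B \<longleftrightarrow> (\<forall>i. smooth_on U (\<lambda>x. B x $ i))
     \<and> (\<forall>z\<in>TU0 U. \<forall>i j. (\<Sum>h\<in>UNIV. B (fst z) $ h * Ct F h i j z) = 0)"

definition Bsq :: "'n::finite fn \<Rightarrow> (real^'n \<Rightarrow> real^'n) \<Rightarrow> 'n fn" where
  "Bsq F B z = (\<Sum>i\<in>UNIV. \<Sum>j\<in>UNIV. gt F i j z * B (fst z) $ i * B (fst z) $ j)"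

definition B0 :: "'n::finite fn \<Rightarrow> (real^'n \<Rightarrow> real^'n) \<Rightarrow> 'n fn" where
  "B0 F B z = (\<Sum>i\<in>UNIV. \<Sum>j\<in>UNIV. gt F i j z * B (fst z) $ i * snd z $ j)"

end

theory Submission
  imports Defs
begin

(* Differentiating the identity B^h C_hij = 0 vertically and horizontally shows that every term
   of B^i C_ijk|l except one still carrying a factor B^h C_h.. cancels, so B^i B^j C_ijk|l = 0 and
   therefore B^i B^j P_ijk = 0.  Inserting the P-reducibility formula and contracting once more
   with B^k gives 3 H (B^r P_r) = 0 with H = h_ij B^i B^j.  By Euler's theorem g_ij y^j = F l_i,
   so F^2 H = B^2 F^2 - B_0^2 is nonzero; hence B^r P_r = 0, then P_k = 0 and finally P_ijk = 0.
   Since smoothness is given by iterated directional derivatives, the symmetry of g_ij and C_ijk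
   (Schwarz's theorem) and the linearity of directional derivatives used for Euler's theorem
   follow from the mean value theorem. *)

section \<open>Directional derivatives of smooth functions\<close>

lemma open_line_preimage:
  fixes D :: "'a::real_normed_vector set"
  assumes "open D"
  shows "open {t::real. z + t *\<^sub>R v \<in> D}"
proof -
  have "continuous_on UNIV (\<lambda>t::real. z + t *\<^sub>R v)"
    by (intro continuous_intros)
  then show ?thesis
    using open_vimage[OF assms] by (simp add: vimage_def)
qed

lemma DERIV_line_unique_on_open:
  fixes D :: "'a::real_normed_vector set"
  assumes "((\<lambda>t. g (z + t *\<^sub>R v)) has_real_derivative d) (at 0)"
    and "((\<lambda>t. h (z + t *\<^sub>R v)) has_real_derivative d') (at 0)"
    and "open D" "z \<in> D" "\<And>w. w \<in> D \<Longrightarrow> g w = h w"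
  shows "d = d'"
proof -
  have "((\<lambda>t. h (z + t *\<^sub>R v)) has_real_derivative d) (at 0)"
    by (rule has_field_derivative_transform_within_open[OF assms(1) open_line_preimage[OF assms(3)]])
       (use assms(4,5) in auto)
  then show ?thesis
    using assms(2) DERIV_unique by blast
qed

lemma dirderiv_cong_open:
  fixes D :: "'a::real_normed_vector set"
  assumes "open D" "z \<in> D" "\<And>w. w \<in> D \<Longrightarrow> f w = g w"
  shows "dirderiv v f z = dirderiv v g z"
proof -
  have "\<forall>\<^sub>F t in nhds 0. z + t *\<^sub>R v \<in> D"
    using eventually_nhds_in_open[OF open_line_preimage[OF assms(1)], of 0 z v] assms(2) by simp
  then show ?thesis
    unfolding dirderiv_def by (rule deriv_cong_ev[OF eventually_mono]) (auto simp: assms(3))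
qed

lemma dirderiv_eqI:
  assumes "((\<lambda>t. f (z + t *\<^sub>R v)) has_real_derivative d) (at 0)"
  shows "dirderiv v f z = d"
  unfolding dirderiv_def using assms by (rule DERIV_imp_deriv)

lemma dirderiv_zero [simp]: "dirderiv 0 f z = 0"
  by (simp add: dirderiv_def)

lemma dirderiv_const [simp]: "dirderiv v (\<lambda>_. c) z = 0"
  by (simp add: dirderiv_def)

lemma smooth_on_iterated_has_derivative:
  assumes "smooth_on D f" "z \<in> D"
  shows "((\<lambda>t. foldr dirderiv vs f (z + t *\<^sub>R v)) has_real_derivative
           dirderiv v (foldr dirderiv vs f) z) (at 0)"
  using assms unfolding smooth_on_def by blast

lemma smooth_on_iterated_continuous:
  assumes "smooth_on D f"
  shows "continuous_on D (foldr dirderiv vs f)"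
  using assms unfolding smooth_on_def by blast

lemma smooth_on_has_derivative:
  assumes "smooth_on D f" "z \<in> D"
  shows "((\<lambda>t. f (z + t *\<^sub>R v)) has_real_derivative dirderiv v f z) (at 0)"
  using smooth_on_iterated_has_derivative[OF assms, of "[]"] by simp

lemma smooth_on_continuous:
  assumes "smooth_on D f"
  shows "continuous_on D f"
  using smooth_on_iterated_continuous[OF assms, of "[]"] by simp

lemma smooth_on_dirderiv:
  assumes "smooth_on D f"
  shows "smooth_on D (dirderiv v f)"
proof -
  have "foldr dirderiv vs (dirderiv v f) = foldr dirderiv (vs @ [v]) f" for vs
    by simp
  then show ?thesis
    using assms unfolding smooth_on_def by metis
qed

lemma smooth_on_has_derivative_along_line:
  assumes "smooth_on D f" "p + b *\<^sub>R v \<in> D"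
  shows "((\<lambda>s. f (p + s *\<^sub>R v)) has_real_derivative dirderiv v f (p + b *\<^sub>R v)) (at b)"
proof -
  have "((\<lambda>t. f (p + b *\<^sub>R v + t *\<^sub>R v)) has_real_derivative dirderiv v f (p + b *\<^sub>R v)) (at 0)"
    by (rule smooth_on_has_derivative[OF assms])
  moreover have "(\<lambda>t. f (p + b *\<^sub>R v + t *\<^sub>R v)) = (\<lambda>t. f (p + (t + b) *\<^sub>R v))"
    by (auto simp: algebra_simps)
  ultimately show ?thesis
    using DERIV_shift[of "\<lambda>s. f (p + s *\<^sub>R v)" _ 0 b] by simp
qed

lemma smooth_on_const:
  fixes D :: "'a::real_normed_vector set"
  shows "smooth_on D (\<lambda>_. c)"
proof -
  have iterated: "foldr dirderiv vs (\<lambda>_. c) = (\<lambda>_. if vs = [] then c else 0)" for vs :: "'a list"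
    by (induction vs) auto
  show ?thesis
    unfolding smooth_on_def iterated by auto
qed

definition leibniz_sum ::
    "('a::real_normed_vector \<Rightarrow> real) \<Rightarrow> ('a \<Rightarrow> real) \<Rightarrow> ('a list \<times> 'a list) list \<Rightarrow> 'a \<Rightarrow> real" where
  "leibniz_sum f g L z = (\<Sum>(us, vs)\<leftarrow>L. foldr dirderiv us f z * foldr dirderiv vs g z)"

definition leibniz_step :: "'a \<Rightarrow> ('a list \<times> 'a list) list \<Rightarrow> ('a list \<times> 'a list) list" where
  "leibniz_step v L = concat (map (\<lambda>(us, vs). [(v # us, vs), (us, v # vs)]) L)"

lemma leibniz_sum_has_derivative:
  assumes "smooth_on D f" "smooth_on D g" "z \<in> D"
  shows "((\<lambda>t. leibniz_sum f g L (z + t *\<^sub>R v)) has_real_derivative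
           leibniz_sum f g (leibniz_step v L) z) (at 0)"
proof (induction L)
  case Nil
  then show ?case by (simp add: leibniz_sum_def leibniz_step_def)
next
  case (Cons p L)
  obtain us vs where p: "p = (us, vs)" by force
  have "((\<lambda>t. foldr dirderiv us f (z + t *\<^sub>R v) * foldr dirderiv vs g (z + t *\<^sub>R v)
              + leibniz_sum f g L (z + t *\<^sub>R v))
     has_real_derivative (foldr dirderiv (v # us) f z * foldr dirderiv vs g (z + 0 *\<^sub>R v) +
        foldr dirderiv (v # vs) g z * foldr dirderiv us f (z + 0 *\<^sub>R v))
        + leibniz_sum f g (leibniz_step v L) z) (at 0)"
    using smooth_on_iterated_has_derivative[OF assms(1,3), of us v]
      smooth_on_iterated_has_derivative[OF assms(2,3), of vs v]
    by (intro DERIV_add DERIV_mult Cons.IH) simp_all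
  then show ?case
    by (simp add: p leibniz_sum_def leibniz_step_def algebra_simps)
qed

lemma leibniz_sum_continuous:
  assumes "smooth_on D f" "smooth_on D g"
  shows "continuous_on D (leibniz_sum f g L)"
proof (induction L)
  case Nil
  then show ?case by (simp add: leibniz_sum_def)
next
  case (Cons p L)
  obtain us vs where p: "p = (us, vs)" by force
  have "continuous_on D (\<lambda>z. foldr dirderiv us f z * foldr dirderiv vs g z + leibniz_sum f g L z)"
    by (intro continuous_on_add continuous_on_mult smooth_on_iterated_continuous assms Cons.IH)
  then show ?case
    by (simp add: p leibniz_sum_def)
qed

lemma iterated_dirderiv_mult_has_derivative:
  fixes D :: "'a::real_normed_vector set"
  assumes "open D" "smooth_on D f" "smooth_on D g" "z \<in> D"
    and L: "\<And>w. w \<in> D \<Longrightarrow> foldr dirderiv vs (\<lambda>w. f w * g w) w = leibniz_sum f g L w"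
  shows "((\<lambda>t. foldr dirderiv vs (\<lambda>w. f w * g w) (z + t *\<^sub>R v)) has_real_derivative
           leibniz_sum f g (leibniz_step v L) z) (at 0)"
proof (rule has_field_derivative_transform_within_open
         [OF leibniz_sum_has_derivative[OF assms(2-4)] open_line_preimage[OF assms(1)]])
  show "0 \<in> {t. z + t *\<^sub>R v \<in> D}"
    using assms(4) by simp
qed (simp add: L)

lemma iterated_dirderiv_mult_eq_leibniz_sum:
  fixes D :: "'a::real_normed_vector set"
  assumes "open D" "smooth_on D f" "smooth_on D g"
  shows "\<exists>L. \<forall>z\<in>D. foldr dirderiv vs (\<lambda>z. f z * g z) z = leibniz_sum f g L z"
proof (induction vs)
  case Nil
  have "\<forall>z\<in>D. foldr dirderiv [] (\<lambda>z. f z * g z) z = leibniz_sum f g [([], [])] z"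
    by (simp add: leibniz_sum_def)
  then show ?case by blast
next
  case (Cons v vs)
  then obtain L where L: "\<And>z. z \<in> D \<Longrightarrow> foldr dirderiv vs (\<lambda>z. f z * g z) z = leibniz_sum f g L z"
    by blast
  have "foldr dirderiv (v # vs) (\<lambda>z. f z * g z) z = leibniz_sum f g (leibniz_step v L) z" if "z \<in> D" for z
    unfolding foldr_Cons o_apply by (rule dirderiv_eqI[OF iterated_dirderiv_mult_has_derivative[OF assms that L]])
  then show ?case by blast
qed

lemma smooth_on_mult:
  fixes D :: "'a::real_normed_vector set"
  assumes "open D" "smooth_on D f" "smooth_on D g"
  shows "smooth_on D (\<lambda>z. f z * g z)"
  unfolding smooth_on_def
proof (intro allI conjI ballI)
  fix vs v z
  obtain L where L: "\<And>w. w \<in> D \<Longrightarrow> foldr dirderiv vs (\<lambda>z. f z * g z) w = leibniz_sum f g L w"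
    using iterated_dirderiv_mult_eq_leibniz_sum[OF assms] by blast
  show "continuous_on D (foldr dirderiv vs (\<lambda>z. f z * g z))"
    using continuous_on_cong[OF refl L] leibniz_sum_continuous[OF assms(2,3)] by (rule iffD2)
  assume "z \<in> D"
  note has_derivative = iterated_dirderiv_mult_has_derivative[OF assms this L]
  then have "dirderiv v (foldr dirderiv vs (\<lambda>z. f z * g z)) z = leibniz_sum f g (leibniz_step v L) z"
    by (rule dirderiv_eqI)
  with has_derivative show "((\<lambda>t. foldr dirderiv vs (\<lambda>z. f z * g z) (z + t *\<^sub>R v)) has_real_derivative
      dirderiv v (foldr dirderiv vs (\<lambda>z. f z * g z)) z) (at 0)"
    by (simp only:)
qed

lemma smooth_on_divide_const:
  fixes D :: "'a::real_normed_vector set"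
  assumes "open D" "smooth_on D f"
  shows "smooth_on D (\<lambda>z. f z / c)"
  using smooth_on_mult[OF assms smooth_on_const, of "1 / c"] by simp

lemma smooth_on_isCont:
  assumes "open D" "smooth_on D f" "w \<in> D"
  shows "isCont f w"
  using assms continuous_on_eq_continuous_at smooth_on_continuous by blast

lemma MVT_symmetric:
  fixes \<phi> \<phi>' :: "real \<Rightarrow> real"
  assumes "\<And>s. \<bar>s\<bar> \<le> \<bar>t\<bar> \<Longrightarrow> (\<phi> has_real_derivative \<phi>' s) (at s)"
  shows "\<exists>s. \<bar>s\<bar> \<le> \<bar>t\<bar> \<and> \<phi> t - \<phi> 0 = t * \<phi>' s"
  using Maclaurin_bi_le[of "\<lambda>m. if m = 0 then \<phi> else \<phi>'" \<phi> 1 t] assms by (auto simp: mult.commute)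

lemma norm_scaleR_add_le:
  fixes u v :: "'a::real_normed_vector"
  assumes "\<bar>a\<bar> \<le> \<bar>t\<bar>" "\<bar>b\<bar> \<le> \<bar>t\<bar>"
  shows "norm (a *\<^sub>R u + b *\<^sub>R v) \<le> (norm u + norm v) * \<bar>t\<bar>"
proof -
  have "norm (a *\<^sub>R u + b *\<^sub>R v) \<le> \<bar>a\<bar> * norm u + \<bar>b\<bar> * norm v"
    using norm_triangle_ineq[of "a *\<^sub>R u" "b *\<^sub>R v"] by simp
  also have "\<dots> \<le> \<bar>t\<bar> * norm u + \<bar>t\<bar> * norm v"
    using assms by (intro add_mono mult_right_mono) auto
  finally show ?thesis
    by (simp add: algebra_simps)
qed

lemma eventually_square_in_open:
  fixes D :: "'a::real_normed_vector set"
  assumes "open D" "w \<in> D"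
  shows "\<forall>\<^sub>F t in at (0::real). \<forall>a b. \<bar>a\<bar> \<le> \<bar>t\<bar> \<longrightarrow> \<bar>b\<bar> \<le> \<bar>t\<bar> \<longrightarrow> w + a *\<^sub>R u + b *\<^sub>R v \<in> D"
proof -
  obtain e where "e > 0" and e: "ball w e \<subseteq> D"
    using assms open_contains_ball by blast
  have "((\<lambda>t::real. (norm u + norm v) * \<bar>t\<bar>) \<longlongrightarrow> (norm u + norm v) * \<bar>0\<bar>) (at 0)"
    by (intro tendsto_intros)
  then have "\<forall>\<^sub>F t in at (0::real). (norm u + norm v) * \<bar>t\<bar> < e"
    using \<open>e > 0\<close> by (intro order_tendstoD(2)) auto
  then show ?thesis
  proof (rule eventually_mono, intro allI impI)
    fix t a b :: real
    assume "(norm u + norm v) * \<bar>t\<bar> < e" "\<bar>a\<bar> \<le> \<bar>t\<bar>" "\<bar>b\<bar> \<le> \<bar>t\<bar>"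
    then have "norm (a *\<^sub>R u + b *\<^sub>R v) < e"
      using norm_scaleR_add_le[of a t b u v] by linarith
    then show "w + a *\<^sub>R u + b *\<^sub>R v \<in> D"
      using e by (metis add.assoc add_diff_cancel_left' dist_commute dist_norm mem_ball subsetD)
  qed
qed

lemma tendsto_intermediate_value:
  fixes g :: "'a::real_normed_vector \<Rightarrow> real"
  assumes "isCont g w"
    and "\<forall>\<^sub>F t in at (0::real). \<exists>p. norm (p - w) \<le> K * \<bar>t\<bar> \<and> Q t = g p"
  shows "(Q \<longlongrightarrow> g w) (at 0)"
proof -
  define p where "p t = (SOME p. norm (p - w) \<le> K * \<bar>t\<bar> \<and> Q t = g p)" for t
  have p: "\<forall>\<^sub>F t in at 0. norm (p t - w) \<le> K * \<bar>t\<bar> \<and> Q t = g (p t)"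
    using assms(2) by (rule eventually_mono) (unfold p_def, rule someI_ex)
  have "\<forall>\<^sub>F t in at 0. norm (p t - w) \<le> K * \<bar>t\<bar>"
    using p by (rule eventually_mono) simp
  moreover have "((\<lambda>t::real. K * \<bar>t\<bar>) \<longlongrightarrow> 0) (at 0)"
    using tendsto_mult_right_zero[OF tendsto_rabs_zero[OF tendsto_ident_at]] by simp
  ultimately have "((\<lambda>t. p t - w) \<longlongrightarrow> 0) (at 0)"
    by (rule Lim_null_comparison)
  then have "((\<lambda>t. g (p t)) \<longlongrightarrow> g w) (at 0)"
    by (rule isCont_tendsto_compose[OF assms(1) LIM_zero_cancel])
  then show ?thesis
    by (rule Lim_transform_eventually) (rule eventually_mono[OF p], simp)
qed

(* By the mean value theorem, f (w + t u + t v) - f (w + t u) is t times the v-derivative at a point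
   within distance O(t) of w; continuity of that derivative does the rest. *)
lemma dirderiv_add:
  fixes D :: "'a::real_normed_vector set"
  assumes "open D" "smooth_on D f" "w \<in> D"
  shows "dirderiv (u + v) f w = dirderiv u f w + dirderiv v f w"
proof -
  let ?increment = "\<lambda>t. f (w + t *\<^sub>R u + t *\<^sub>R v) - f (w + t *\<^sub>R u)"
  have quotient_mean_value: "\<exists>p. norm (p - w) \<le> (norm u + norm v) * \<bar>t\<bar> \<and>
                    (?increment (0 + t) - ?increment 0) / t = dirderiv v f p"
    if square: "\<forall>a b. \<bar>a\<bar> \<le> \<bar>t\<bar> \<longrightarrow> \<bar>b\<bar> \<le> \<bar>t\<bar> \<longrightarrow> w + a *\<^sub>R u + b *\<^sub>R v \<in> D"
      and "t \<noteq> 0" for t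
  proof -
    have "((\<lambda>s. f (w + t *\<^sub>R u + s *\<^sub>R v)) has_real_derivative
            dirderiv v f (w + t *\<^sub>R u + s *\<^sub>R v)) (at s)" if "\<bar>s\<bar> \<le> \<bar>t\<bar>" for s
      using square that by (intro smooth_on_has_derivative_along_line[OF assms(2)]) auto
    from MVT_symmetric[OF this] obtain s where "\<bar>s\<bar> \<le> \<bar>t\<bar>"
      "f (w + t *\<^sub>R u + t *\<^sub>R v) - f (w + t *\<^sub>R u + 0 *\<^sub>R v) = t * dirderiv v f (w + t *\<^sub>R u + s *\<^sub>R v)"
      by blast
    then show ?thesis
      using \<open>t \<noteq> 0\<close> norm_scaleR_add_le[of t t s u v]
      by (intro exI[of _ "w + t *\<^sub>R u + s *\<^sub>R v"]) (simp add: add.assoc)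
  qed
  have "\<forall>\<^sub>F t in at 0. \<exists>p. norm (p - w) \<le> (norm u + norm v) * \<bar>t\<bar> \<and>
                    (?increment (0 + t) - ?increment 0) / t = dirderiv v f p"
    using eventually_square_in_open[OF assms(1,3), of u v] eventually_neq_at_within[of 0 0 UNIV]
    by (rule eventually_elim2) (rule quotient_mean_value)
  moreover have "isCont (dirderiv v f) w"
    using assms by (intro smooth_on_isCont smooth_on_dirderiv)
  ultimately have "(?increment has_real_derivative dirderiv v f w) (at 0)"
    unfolding DERIV_def by (intro tendsto_intermediate_value)
  then have "((\<lambda>t. ?increment t + f (w + t *\<^sub>R u)) has_real_derivative
              dirderiv v f w + dirderiv u f w) (at 0)"
    by (intro DERIV_add smooth_on_has_derivative[OF assms(2,3)])
  then show ?thesis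
    by (intro dirderiv_eqI) (simp add: scaleR_add_right add_ac)
qed

lemma dirderiv_scaleR:
  assumes "smooth_on D f" "w \<in> D"
  shows "dirderiv (c *\<^sub>R v) f w = c * dirderiv v f w"
proof -
  have "((\<lambda>s. f (w + s *\<^sub>R v)) has_real_derivative dirderiv v f w) (at (c * 0))"
    using smooth_on_has_derivative[OF assms] by simp
  from DERIV_chain2[OF this DERIV_cmult_Id]
  show ?thesis
    by (intro dirderiv_eqI) (simp add: mult.commute)
qed

lemma dirderiv_sum:
  fixes D :: "'a::real_normed_vector set"
  assumes "open D" "smooth_on D f" "w \<in> D" "finite S"
  shows "dirderiv (\<Sum>j\<in>S. c j *\<^sub>R u j) f w = (\<Sum>j\<in>S. c j * dirderiv (u j) f w)"
  using assms(4)
  by induction (simp_all add: dirderiv_add[OF assms(1-3)] dirderiv_scaleR[OF assms(2,3)])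

lemma second_difference_mean_value:
  assumes "smooth_on D f"
    and square: "\<And>a b. \<bar>a\<bar> \<le> \<bar>t\<bar> \<Longrightarrow> \<bar>b\<bar> \<le> \<bar>t\<bar> \<Longrightarrow> w + a *\<^sub>R u + b *\<^sub>R v \<in> D"
  shows "\<exists>a b. \<bar>a\<bar> \<le> \<bar>t\<bar> \<and> \<bar>b\<bar> \<le> \<bar>t\<bar> \<and>
    f (w + t *\<^sub>R u + t *\<^sub>R v) - f (w + t *\<^sub>R u) - f (w + t *\<^sub>R v) + f w
      = t * t * dirderiv u (dirderiv v f) (w + a *\<^sub>R u + b *\<^sub>R v)"
proof -
  let ?Dv = "dirderiv v f"
  have "((\<lambda>b. f (w + t *\<^sub>R u + b *\<^sub>R v) - f (w + 0 *\<^sub>R u + b *\<^sub>R v)) has_real_derivative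
          ?Dv (w + t *\<^sub>R u + b *\<^sub>R v) - ?Dv (w + 0 *\<^sub>R u + b *\<^sub>R v)) (at b)"
    if "\<bar>b\<bar> \<le> \<bar>t\<bar>" for b
    using square[of t b] square[of 0 b] that
    by (intro DERIV_diff smooth_on_has_derivative_along_line[OF assms(1)]) auto
  from MVT_symmetric[OF this] obtain b where "\<bar>b\<bar> \<le> \<bar>t\<bar>"
    and "f (w + t *\<^sub>R u + t *\<^sub>R v) - f (w + 0 *\<^sub>R u + t *\<^sub>R v)
          - (f (w + t *\<^sub>R u + 0 *\<^sub>R v) - f (w + 0 *\<^sub>R u + 0 *\<^sub>R v))
        = t * (?Dv (w + t *\<^sub>R u + b *\<^sub>R v) - ?Dv (w + 0 *\<^sub>R u + b *\<^sub>R v))"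
    by blast
  then have b: "\<bar>b\<bar> \<le> \<bar>t\<bar>"
    and first_difference: "f (w + t *\<^sub>R u + t *\<^sub>R v) - f (w + t *\<^sub>R u) - f (w + t *\<^sub>R v) + f w
        = t * (?Dv (w + b *\<^sub>R v + t *\<^sub>R u) - ?Dv (w + b *\<^sub>R v + 0 *\<^sub>R u))"
    by (simp_all add: add_ac)
  have "((\<lambda>a. ?Dv (w + b *\<^sub>R v + a *\<^sub>R u)) has_real_derivative
          dirderiv u ?Dv (w + b *\<^sub>R v + a *\<^sub>R u)) (at a)"
    if "\<bar>a\<bar> \<le> \<bar>t\<bar>" for a
  proof -
    have "w + b *\<^sub>R v + a *\<^sub>R u \<in> D"
      using square[OF that b] by (simp add: add_ac)
    then show ?thesis
      by (rule smooth_on_has_derivative_along_line[OF smooth_on_dirderiv[OF assms(1)]])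
  qed
  from MVT_symmetric[OF this] obtain a where "\<bar>a\<bar> \<le> \<bar>t\<bar>"
    and "?Dv (w + b *\<^sub>R v + t *\<^sub>R u) - ?Dv (w + b *\<^sub>R v + 0 *\<^sub>R u)
          = t * dirderiv u ?Dv (w + b *\<^sub>R v + a *\<^sub>R u)"
    by blast
  with b first_difference show ?thesis
    by (intro exI[of _ a] exI[of _ b]) (simp add: add_ac)
qed

lemma second_difference_quotient_tendsto:
  fixes D :: "'a::real_normed_vector set"
  assumes "open D" "smooth_on D f" "w \<in> D"
  shows "((\<lambda>t. (f (w + t *\<^sub>R u + t *\<^sub>R v) - f (w + t *\<^sub>R u) - f (w + t *\<^sub>R v) + f w) / (t * t))
           \<longlongrightarrow> dirderiv u (dirderiv v f) w) (at 0)"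
proof (rule tendsto_intermediate_value[where g = "dirderiv u (dirderiv v f)" and K = "norm u + norm v"])
  show "isCont (dirderiv u (dirderiv v f)) w"
    using assms by (intro smooth_on_isCont smooth_on_dirderiv)
  have quotient_mean_value: "\<exists>p. norm (p - w) \<le> (norm u + norm v) * \<bar>t\<bar> \<and>
          (f (w + t *\<^sub>R u + t *\<^sub>R v) - f (w + t *\<^sub>R u) - f (w + t *\<^sub>R v) + f w) / (t * t)
            = dirderiv u (dirderiv v f) p"
    if square: "\<forall>a b. \<bar>a\<bar> \<le> \<bar>t\<bar> \<longrightarrow> \<bar>b\<bar> \<le> \<bar>t\<bar> \<longrightarrow> w + a *\<^sub>R u + b *\<^sub>R v \<in> D"
      and "t \<noteq> 0" for t
  proof -
    obtain a b where "\<bar>a\<bar> \<le> \<bar>t\<bar>" "\<bar>b\<bar> \<le> \<bar>t\<bar>"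
      "f (w + t *\<^sub>R u + t *\<^sub>R v) - f (w + t *\<^sub>R u) - f (w + t *\<^sub>R v) + f w
        = t * t * dirderiv u (dirderiv v f) (w + a *\<^sub>R u + b *\<^sub>R v)"
      using second_difference_mean_value[OF assms(2) square[rule_format]] by blast
    then show ?thesis
      using \<open>t \<noteq> 0\<close> norm_scaleR_add_le[of a t b u v]
      by (intro exI[of _ "w + a *\<^sub>R u + b *\<^sub>R v"]) (simp add: add.assoc)
  qed
  show "\<forall>\<^sub>F t in at 0. \<exists>p. norm (p - w) \<le> (norm u + norm v) * \<bar>t\<bar> \<and>
          (f (w + t *\<^sub>R u + t *\<^sub>R v) - f (w + t *\<^sub>R u) - f (w + t *\<^sub>R v) + f w) / (t * t)
            = dirderiv u (dirderiv v f) p"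
    using eventually_square_in_open[OF assms(1,3), of u v] eventually_neq_at_within[of 0 0 UNIV]
    by (rule eventually_elim2) (rule quotient_mean_value)
qed

(* Schwarz's theorem: both sides are limits of the same second difference quotient. *)
lemma dirderiv_commute:
  fixes D :: "'a::real_normed_vector set"
  assumes "open D" "smooth_on D f" "w \<in> D"
  shows "dirderiv u (dirderiv v f) w = dirderiv v (dirderiv u f) w"
proof -
  have "(\<lambda>t. (f (w + t *\<^sub>R v + t *\<^sub>R u) - f (w + t *\<^sub>R v) - f (w + t *\<^sub>R u) + f w) / (t * t))
      = (\<lambda>t. (f (w + t *\<^sub>R u + t *\<^sub>R v) - f (w + t *\<^sub>R u) - f (w + t *\<^sub>R v) + f w) / (t * t))"
    by (simp add: add_ac diff_diff_eq)
  then show ?thesis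
    using second_difference_quotient_tendsto[OF assms, of u v]
      second_difference_quotient_tendsto[OF assms, of v u]
    by (intro tendsto_unique[OF at_neq_bot]) simp_all
qed

section \<open>Contractions of finite sums\<close>

lemma sum_mult_sum_swap:
  fixes b :: "'i \<Rightarrow> 'a::comm_semiring_0"
  shows "(\<Sum>i\<in>I. b i * (\<Sum>r\<in>R. f r i)) = (\<Sum>r\<in>R. \<Sum>i\<in>I. b i * f r i)"
  unfolding sum_distrib_left by (rule sum.swap)

lemma sum_contract_eq_0:
  fixes b :: "'i \<Rightarrow> 'a::comm_semiring_0"
  assumes "\<And>r. r \<in> R \<Longrightarrow> (\<Sum>i\<in>I. b i * X r i) = 0"
  shows "(\<Sum>i\<in>I. b i * (\<Sum>r\<in>R. X r i * G r)) = 0"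
proof -
  have "(\<Sum>i\<in>I. b i * (\<Sum>r\<in>R. X r i * G r)) = (\<Sum>r\<in>R. (\<Sum>i\<in>I. b i * X r i) * G r)"
    unfolding sum_mult_sum_swap sum_distrib_right by (simp add: mult.assoc)
  then show ?thesis
    by (simp add: assms)
qed

lemma sum_sum_reducible_form_eq:
  fixes b P :: "'n::finite \<Rightarrow> 'a::comm_semiring_1" and h :: "'n \<Rightarrow> 'n \<Rightarrow> 'a"
  shows "(\<Sum>i\<in>UNIV. \<Sum>j\<in>UNIV. b i * b j * (h i j * P k + h j k * P i + h k i * P j))
    = (\<Sum>i\<in>UNIV. \<Sum>j\<in>UNIV. h i j * b i * b j) * P k
      + ((\<Sum>j\<in>UNIV. b j * h j k) + (\<Sum>i\<in>UNIV. b i * h k i)) * (\<Sum>i\<in>UNIV. b i * P i)"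
proof -
  have pointwise: "b i * b j * (h i j * P k + h j k * P i + h k i * P j)
      = h i j * b i * b j * P k + (b i * P i) * (b j * h j k) + (b i * h k i) * (b j * P j)" for i j
    by (simp add: algebra_simps)
  have "(\<Sum>i\<in>UNIV. \<Sum>j\<in>UNIV. b i * b j * (h i j * P k + h j k * P i + h k i * P j))
    = (\<Sum>i\<in>UNIV. \<Sum>j\<in>UNIV. h i j * b i * b j * P k)
      + (\<Sum>i\<in>UNIV. \<Sum>j\<in>UNIV. (b i * P i) * (b j * h j k))
      + (\<Sum>i\<in>UNIV. \<Sum>j\<in>UNIV. (b i * h k i) * (b j * P j))"
    by (simp only: pointwise sum.distrib)
  also have "\<dots> = (\<Sum>i\<in>UNIV. \<Sum>j\<in>UNIV. h i j * b i * b j) * P k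
      + (\<Sum>i\<in>UNIV. b i * P i) * (\<Sum>j\<in>UNIV. b j * h j k)
      + (\<Sum>i\<in>UNIV. b i * h k i) * (\<Sum>j\<in>UNIV. b j * P j)"
    unfolding sum_product by (simp only: sum_distrib_right)
  finally show ?thesis
    by (simp add: algebra_simps)
qed

(* With H = h(b, b), \<beta> = b\<cdot>P and b\<cdot>c = 2 H, contracting the reduced equations
   H P_k + c_k \<beta> = 0 once more with b gives 3 H \<beta> = 0. *)
lemma reducible_contraction_eq_0:
  fixes b P :: "'n::finite \<Rightarrow> 'a::field_char_0" and h :: "'n \<Rightarrow> 'n \<Rightarrow> 'a"
  assumes "N \<noteq> 0" and nondegenerate: "(\<Sum>i\<in>UNIV. \<Sum>j\<in>UNIV. h i j * b i * b j) \<noteq> 0"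
    and contraction: "\<And>k. (\<Sum>i\<in>UNIV. \<Sum>j\<in>UNIV. b i * b j * ((h i j * P k + h j k * P i + h k i * P j) / N)) = 0"
  shows "P k = 0"
proof -
  define H where "H = (\<Sum>i\<in>UNIV. \<Sum>j\<in>UNIV. h i j * b i * b j)"
  define \<beta> where "\<beta> = (\<Sum>i\<in>UNIV. b i * P i)"
  define c where "c k = (\<Sum>j\<in>UNIV. b j * h j k) + (\<Sum>i\<in>UNIV. b i * h k i)" for k
  have reduced: "H * P k + c k * \<beta> = 0" for k
  proof -
    have "(\<Sum>i\<in>UNIV. \<Sum>j\<in>UNIV. b i * b j * (h i j * P k + h j k * P i + h k i * P j)) / N = 0"
      using contraction[of k] by (simp add: sum_divide_distrib)
    then show ?thesis
      using \<open>N \<noteq> 0\<close> by (simp add: sum_sum_reducible_form_eq H_def c_def \<beta>_def)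
  qed
  have "(\<Sum>k\<in>UNIV. b k * c k)
      = (\<Sum>k\<in>UNIV. \<Sum>j\<in>UNIV. h j k * b j * b k) + (\<Sum>k\<in>UNIV. \<Sum>i\<in>UNIV. h k i * b k * b i)"
    unfolding c_def by (simp add: distrib_left sum.distrib sum_distrib_left mult_ac)
  also have "\<dots> = 2 * H"
    unfolding H_def by (subst sum.swap) simp
  finally have bc: "(\<Sum>k\<in>UNIV. b k * c k) = 2 * H" .
  have "(\<Sum>k\<in>UNIV. b k * (H * P k + c k * \<beta>)) = H * \<beta> + \<beta> * (\<Sum>k\<in>UNIV. b k * c k)"
    unfolding \<beta>_def by (simp add: distrib_left sum.distrib sum_distrib_left mult_ac)
  then have "3 * H * \<beta> = 0"
    using reduced bc by simp
  then have "\<beta> = 0"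
    using nondegenerate by (simp add: H_def)
  then have "H * P k = 0"
    using reduced[of k] by simp
  then show ?thesis
    using nondegenerate by (simp add: H_def)
qed

section \<open>Finsler spaces with a semi-concurrent vector field\<close>

lemma open_TU0: "open U \<Longrightarrow> open (TU0 U)"
  unfolding TU0_def by (intro open_Times open_Diff open_UNIV closed_singleton)

lemma vertical_basis_expansion:
  "((0::real^'n::finite), y) = (\<Sum>j\<in>UNIV. (y $ j) *\<^sub>R ((0::real^'n), axis j (1::real)))"
proof -
  have "(\<Sum>j\<in>UNIV. (y $ j) *\<^sub>R ((0::real^'n), axis j (1::real))) = (0, \<Sum>j\<in>UNIV. (y $ j) *\<^sub>R axis j 1)"
    by (simp add: prod_eq_iff fst_sum snd_sum)
  also have "(\<Sum>j\<in>UNIV. (y $ j) *\<^sub>R axis j (1::real)) = y"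
    using basis_expansion[of y] by (simp add: scalar_mult_eq_scaleR)
  finally show ?thesis
    by simp
qed

lemma sum_axis_mult: "(\<Sum>j\<in>UNIV. axis i (1::real) $ j * X j) = X i"
proof -
  have "(\<Sum>j\<in>UNIV. axis i (1::real) $ j * X j) = (\<Sum>j\<in>UNIV. if j = i then X j else 0)"
    by (rule sum.cong) (auto simp: axis_def)
  then show ?thesis
    by simp
qed

context
  fixes U :: "(real^'n::finite) set" and F :: "'n fn"
  assumes finsler: "finsler U F"
begin

lemma finsler_open_TU0: "open (TU0 U)"
  using finsler open_TU0 unfolding finsler_def by blast

lemma finsler_smooth: "smooth_on (TU0 U) F"
  using finsler unfolding finsler_def by blast

lemma smooth_Fsq: "smooth_on (TU0 U) (Fsq F)"
  using smooth_on_mult[OF finsler_open_TU0 finsler_smooth finsler_smooth]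
  by (simp add: Fsq_def power2_eq_square)

lemma smooth_gt: "smooth_on (TU0 U) (gt F i j)"
proof -
  have "gt F i j = (\<lambda>z. dY i (dY j (Fsq F)) z / 2)"
    by (simp add: fun_eq_iff gt_def)
  then show ?thesis
    unfolding dY_def by (metis finsler_open_TU0 smooth_Fsq smooth_on_dirderiv smooth_on_divide_const)
qed

lemma smooth_Ct: "smooth_on (TU0 U) (Ct F i j k)"
proof -
  have "Ct F i j k = (\<lambda>z. dY k (gt F i j) z / 2)"
    by (simp add: fun_eq_iff Ct_def)
  then show ?thesis
    unfolding dY_def by (metis finsler_open_TU0 smooth_gt smooth_on_dirderiv smooth_on_divide_const)
qed

lemma gt_commute: "z \<in> TU0 U \<Longrightarrow> gt F i j z = gt F j i z"
  unfolding gt_def dY_def using dirderiv_commute[OF finsler_open_TU0 smooth_Fsq] by simp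

lemma Ct_commute: "z \<in> TU0 U \<Longrightarrow> Ct F i j k z = Ct F j i k z"
  unfolding Ct_def dY_def using dirderiv_cong_open[OF finsler_open_TU0 _ gt_commute] by simp

lemma dirderiv_vertical_Fsq:
  assumes "z \<in> TU0 U"
  shows "dirderiv (0, snd z) (Fsq F) z = 2 * Fsq F z"
proof -
  obtain x y where z: "z = (x, y)" and "x \<in> U" "y \<noteq> 0"
    using assms by (cases z) (auto simp: TU0_def)
  have homogeneous: "Fsq F (z + t *\<^sub>R (0, y)) = (1 + t)\<^sup>2 * Fsq F z" if "t \<in> {-1<..}" for t
  proof -
    have "z + t *\<^sub>R (0, y) = (x, (1 + t) *\<^sub>R y)"
      by (simp add: z algebra_simps)
    moreover have "F (x, (1 + t) *\<^sub>R y) = (1 + t) * F (x, y)"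
      using finsler \<open>x \<in> U\<close> \<open>y \<noteq> 0\<close> that unfolding finsler_def by auto
    ultimately show ?thesis
      by (simp add: Fsq_def z power_mult_distrib)
  qed
  have "((\<lambda>t. (1 + t)\<^sup>2 * Fsq F z) has_real_derivative 2 * Fsq F z) (at 0)"
    by (auto intro!: derivative_eq_intros)
  then have "((\<lambda>t. Fsq F (z + t *\<^sub>R (0, y))) has_real_derivative 2 * Fsq F z) (at 0)"
  proof (rule has_field_derivative_transform_within_open[of _ _ _ "{-1<..}"])
    show "(1 + t)\<^sup>2 * Fsq F z = Fsq F (z + t *\<^sub>R (0, y))" if "t \<in> {-1<..}" for t
      using homogeneous[OF that] by simp
  qed auto
  then show ?thesis
    unfolding z by (simp add: dirderiv_eqI)
qed

lemma Fsq_euler: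
  assumes "z \<in> TU0 U"
  shows "(\<Sum>j\<in>UNIV. snd z $ j * dY j (Fsq F) z) = 2 * Fsq F z"
proof -
  have "dirderiv (0, snd z) (Fsq F) z = (\<Sum>j\<in>UNIV. snd z $ j * dirderiv (0, axis j 1) (Fsq F) z)"
    unfolding vertical_basis_expansion[of "snd z"] by (rule dirderiv_sum[OF finsler_open_TU0 smooth_Fsq assms]) simp
  then show ?thesis
    using dirderiv_vertical_Fsq[OF assms] by (simp add: dY_def)
qed

lemma dY_Fsq_euler:
  assumes "z \<in> TU0 U"
  shows "(\<Sum>j\<in>UNIV. snd z $ j * dY i (dY j (Fsq F)) z) = dY i (Fsq F) z"
proof -
  let ?e = "(0::real^'n, axis i (1::real))"
  define G where "G w = (\<Sum>j\<in>UNIV. snd w $ j * dY j (Fsq F) w)" for w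
  have smooth_dY: "smooth_on (TU0 U) (dY j (Fsq F))" for j
    unfolding dY_def by (rule smooth_on_dirderiv[OF smooth_Fsq])
  have "((\<lambda>t. \<Sum>j\<in>UNIV. (snd z $ j + t * axis i 1 $ j) * dY j (Fsq F) (z + t *\<^sub>R ?e)) has_real_derivative
     (\<Sum>j\<in>UNIV. axis i 1 $ j * dY j (Fsq F) (z + 0 *\<^sub>R ?e)
        + dY i (dY j (Fsq F)) z * (snd z $ j + 0 * axis i 1 $ j))) (at 0)"
  proof (intro DERIV_sum DERIV_mult)
    show "((\<lambda>t. snd z $ j + t * axis i 1 $ j) has_real_derivative axis i 1 $ j) (at 0)" for j
      by (auto intro!: derivative_eq_intros)
    show "((\<lambda>t. dY j (Fsq F) (z + t *\<^sub>R ?e)) has_real_derivative dY i (dY j (Fsq F)) z) (at 0)" for j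
      unfolding dY_def[of i] by (rule smooth_on_has_derivative[OF smooth_dY assms])
  qed
  moreover have "(\<lambda>t. G (z + t *\<^sub>R ?e))
      = (\<lambda>t. \<Sum>j\<in>UNIV. (snd z $ j + t * axis i 1 $ j) * dY j (Fsq F) (z + t *\<^sub>R ?e))"
    by (simp add: G_def)
  ultimately have "((\<lambda>t. G (z + t *\<^sub>R ?e)) has_real_derivative
     (\<Sum>j\<in>UNIV. axis i 1 $ j * dY j (Fsq F) z + snd z $ j * dY i (dY j (Fsq F)) z)) (at 0)"
    by (simp add: zero_prod_def[symmetric] mult.commute)
  moreover have "((\<lambda>t. 2 * Fsq F (z + t *\<^sub>R ?e)) has_real_derivative 2 * dY i (Fsq F) z) (at 0)"
    unfolding dY_def by (intro DERIV_cmult smooth_on_has_derivative[OF smooth_Fsq assms])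
  ultimately have "(\<Sum>j\<in>UNIV. axis i 1 $ j * dY j (Fsq F) z + snd z $ j * dY i (dY j (Fsq F)) z)
      = 2 * dY i (Fsq F) z"
    by (rule DERIV_line_unique_on_open[OF _ _ finsler_open_TU0 assms]) (simp add: G_def Fsq_euler)
  then show ?thesis
    by (simp add: sum.distrib sum_axis_mult)
qed

lemma dY_Fsq:
  assumes "z \<in> TU0 U"
  shows "dY i (Fsq F) z = 2 * F z * dY i F z"
proof -
  let ?e = "(0::real^'n, axis i (1::real))"
  have "((\<lambda>t. F (z + t *\<^sub>R ?e)) has_real_derivative dY i F z) (at 0)"
    unfolding dY_def by (rule smooth_on_has_derivative[OF finsler_smooth assms])
  from DERIV_mult[OF this this]
  have "((\<lambda>t. Fsq F (z + t *\<^sub>R ?e)) has_real_derivative 2 * F z * dY i F z) (at 0)"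
    by (simp add: Fsq_def power2_eq_square zero_prod_def[symmetric] mult.assoc)
  then show ?thesis
    unfolding dY_def by (rule dirderiv_eqI)
qed

lemma gt_contract_y:
  assumes "z \<in> TU0 U"
  shows "(\<Sum>j\<in>UNIV. gt F i j z * snd z $ j) = F z * lt F i z"
proof -
  have "(\<Sum>j\<in>UNIV. gt F i j z * snd z $ j) = (\<Sum>j\<in>UNIV. snd z $ j * dY i (dY j (Fsq F)) z) / 2"
    by (simp add: gt_def sum_divide_distrib mult.commute)
  then show ?thesis
    using dY_Fsq_euler[OF assms] dY_Fsq[OF assms] by (simp add: lt_def)
qed

lemma angular_form_eq:
  assumes "z \<in> TU0 U"
  shows "(F z)\<^sup>2 * (\<Sum>i\<in>UNIV. \<Sum>j\<in>UNIV. ht F i j z * B (fst z) $ i * B (fst z) $ j)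
    = Bsq F B z * (F z)\<^sup>2 - (B0 F B z)\<^sup>2"
proof -
  let ?b = "\<lambda>i. B (fst z) $ i"
  define L where "L = (\<Sum>i\<in>UNIV. lt F i z * ?b i)"
  have "B0 F B z = (\<Sum>i\<in>UNIV. ?b i * (\<Sum>j\<in>UNIV. gt F i j z * snd z $ j))"
    unfolding B0_def by (simp add: sum_distrib_left mult_ac)
  also have "\<dots> = F z * L"
    unfolding L_def gt_contract_y[OF assms] by (simp add: sum_distrib_left mult_ac)
  finally have B0: "B0 F B z = F z * L" .
  have "ht F i j z * ?b i * ?b j = gt F i j z * ?b i * ?b j - (lt F i z * ?b i) * (lt F j z * ?b j)" for i j
    by (simp add: ht_def algebra_simps)
  then have "(\<Sum>i\<in>UNIV. \<Sum>j\<in>UNIV. ht F i j z * ?b i * ?b j) = Bsq F B z - L * L"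
    unfolding Bsq_def L_def sum_product by (simp only: sum_subtractf)
  then have "Bsq F B z = (\<Sum>i\<in>UNIV. \<Sum>j\<in>UNIV. ht F i j z * ?b i * ?b j) + L * L"
    by simp
  then show ?thesis
    unfolding B0 by (simp add: algebra_simps power2_eq_square)
qed

context
  fixes B :: "real^'n \<Rightarrow> real^'n"
  assumes semi_concurrent: "semi_concurrent U F B"
begin

lemma semi_concurrent_Ct: "z \<in> TU0 U \<Longrightarrow> (\<Sum>h\<in>UNIV. B (fst z) $ h * Ct F h i j z) = 0"
  using semi_concurrent unfolding semi_concurrent_def by blast

lemma semi_concurrent_Ct2: "z \<in> TU0 U \<Longrightarrow> (\<Sum>j\<in>UNIV. B (fst z) $ j * Ct F i j k z) = 0"
  using semi_concurrent_Ct[of z i k] Ct_commute by simp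

lemma semi_concurrent_dirderiv_Ct:
  assumes "z \<in> TU0 U"
  shows "(\<Sum>h\<in>UNIV. dirderiv u (\<lambda>x. B x $ h) (fst z) * Ct F h i j z
            + B (fst z) $ h * dirderiv (u, v) (Ct F h i j) z) = 0"
proof -
  define G where "G w = (\<Sum>h\<in>UNIV. B (fst w) $ h * Ct F h i j w)" for w
  have "fst z \<in> U"
    using assms by (auto simp: TU0_def)
  moreover have "smooth_on U (\<lambda>x. B x $ h)" for h
    using semi_concurrent unfolding semi_concurrent_def by blast
  ultimately have "((\<lambda>t. B (fst z + t *\<^sub>R u) $ h) has_real_derivative dirderiv u (\<lambda>x. B x $ h) (fst z)) (at 0)" for h
    using smooth_on_has_derivative by blast
  moreover have "((\<lambda>t. Ct F h i j (z + t *\<^sub>R (u, v))) has_real_derivative dirderiv (u, v) (Ct F h i j) z) (at 0)" for h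
    by (rule smooth_on_has_derivative[OF smooth_Ct assms])
  ultimately have "((\<lambda>t. \<Sum>h\<in>UNIV. B (fst z + t *\<^sub>R u) $ h * Ct F h i j (z + t *\<^sub>R (u, v))) has_real_derivative
      (\<Sum>h\<in>UNIV. dirderiv u (\<lambda>x. B x $ h) (fst z) * Ct F h i j (z + 0 *\<^sub>R (u, v))
        + dirderiv (u, v) (Ct F h i j) z * B (fst z + 0 *\<^sub>R u) $ h)) (at 0)"
    by (intro DERIV_sum DERIV_mult)
  then have "((\<lambda>t. G (z + t *\<^sub>R (u, v))) has_real_derivative
      (\<Sum>h\<in>UNIV. dirderiv u (\<lambda>x. B x $ h) (fst z) * Ct F h i j z
        + B (fst z) $ h * dirderiv (u, v) (Ct F h i j) z)) (at 0)"
    by (simp add: G_def zero_prod_def[symmetric] mult.commute)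
  moreover have "G w = 0" if "w \<in> TU0 U" for w
    unfolding G_def by (rule semi_concurrent_Ct[OF that])
  ultimately show ?thesis
    using DERIV_line_unique_on_open[OF _ DERIV_const finsler_open_TU0 assms, of G "(u, v)" _ 0] by simp
qed

lemma semi_concurrent_contract_Chd:
  assumes "z \<in> TU0 U"
  shows "(\<Sum>i\<in>UNIV. B (fst z) $ i * Chd F i j k l z)
    = - (\<Sum>i\<in>UNIV. dirderiv (axis l 1) (\<lambda>x. B x $ i) (fst z) * Ct F i j k z)
      - (\<Sum>r\<in>UNIV. Ct F r j k z * (\<Sum>i\<in>UNIV. B (fst z) $ i * cartanF F r i l z))"
proof -
  let ?b = "\<lambda>i. B (fst z) $ i"
  have Chd: "Chd F i j k l z = dX l (Ct F i j k) z - (\<Sum>r\<in>UNIV. dY r (Ct F i j k) z * Nt F r l z)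
     - (\<Sum>r\<in>UNIV. Ct F r j k z * cartanF F r i l z) - (\<Sum>r\<in>UNIV. Ct F i r k z * cartanF F r j l z)
     - (\<Sum>r\<in>UNIV. Ct F i j r z * cartanF F r k l z)" for i
    by (simp add: Chd_def delta_def sum.distrib mult.commute)
  have "(\<Sum>i\<in>UNIV. ?b i * dX l (Ct F i j k) z)
      = - (\<Sum>i\<in>UNIV. dirderiv (axis l 1) (\<lambda>x. B x $ i) (fst z) * Ct F i j k z)"
    using semi_concurrent_dirderiv_Ct[OF assms, where u = "axis l 1" and v = 0 and i = j and j = k]
    by (simp add: dX_def sum.distrib eq_neg_iff_add_eq_0 add.commute)
  moreover have "(\<Sum>i\<in>UNIV. ?b i * (\<Sum>r\<in>UNIV. dY r (Ct F i j k) z * Nt F r l z)) = 0"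
    using semi_concurrent_dirderiv_Ct[OF assms, where u = 0 and i = j and j = k]
    by (intro sum_contract_eq_0) (simp add: dY_def)
  moreover have "(\<Sum>i\<in>UNIV. ?b i * (\<Sum>r\<in>UNIV. Ct F r j k z * cartanF F r i l z))
      = (\<Sum>r\<in>UNIV. Ct F r j k z * (\<Sum>i\<in>UNIV. ?b i * cartanF F r i l z))"
    by (simp add: sum_distrib_left mult.left_commute) (rule sum.swap)
  moreover have "(\<Sum>i\<in>UNIV. ?b i * (\<Sum>r\<in>UNIV. Ct F i r k z * cartanF F r j l z)) = 0"
    by (intro sum_contract_eq_0 semi_concurrent_Ct[OF assms])
  moreover have "(\<Sum>i\<in>UNIV. ?b i * (\<Sum>r\<in>UNIV. Ct F i j r z * cartanF F r k l z)) = 0"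
    by (intro sum_contract_eq_0 semi_concurrent_Ct[OF assms])
  ultimately show ?thesis
    unfolding Chd by (simp add: right_diff_distrib sum_subtractf)
qed

lemma semi_concurrent_contract2_Chd:
  assumes "z \<in> TU0 U"
  shows "(\<Sum>i\<in>UNIV. \<Sum>j\<in>UNIV. B (fst z) $ i * B (fst z) $ j * Chd F i j k l z) = 0"
proof -
  let ?b = "\<lambda>i. B (fst z) $ i"
  have "(\<Sum>j\<in>UNIV. ?b j * (\<Sum>i\<in>UNIV. Ct F i j k z * dirderiv (axis l 1) (\<lambda>x. B x $ i) (fst z))) = 0"
    by (intro sum_contract_eq_0 semi_concurrent_Ct2[OF assms])
  moreover have "(\<Sum>j\<in>UNIV. ?b j * (\<Sum>r\<in>UNIV. Ct F r j k z * (\<Sum>i\<in>UNIV. ?b i * cartanF F r i l z))) = 0"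
    by (intro sum_contract_eq_0 semi_concurrent_Ct2[OF assms])
  ultimately have "(\<Sum>j\<in>UNIV. ?b j * (\<Sum>i\<in>UNIV. ?b i * Chd F i j k l z)) = 0"
    unfolding semi_concurrent_contract_Chd[OF assms]
    by (simp add: right_diff_distrib sum_subtractf sum_negf mult.commute)
  then show ?thesis
    by (subst sum.swap) (simp add: sum_distrib_left mult_ac)
qed

lemma semi_concurrent_contract2_Pt:
  assumes "z \<in> TU0 U"
  shows "(\<Sum>i\<in>UNIV. \<Sum>j\<in>UNIV. B (fst z) $ i * B (fst z) $ j * Pt F i j k z) = 0"
proof -
  let ?b = "\<lambda>i. B (fst z) $ i"
  have "(\<Sum>i\<in>UNIV. \<Sum>j\<in>UNIV. ?b i * ?b j * Pt F i j k z)
      = (\<Sum>i\<in>UNIV. \<Sum>l\<in>UNIV. \<Sum>j\<in>UNIV. ?b i * ?b j * (snd z $ l * Chd F i j k l z))"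
    unfolding Pt_def by (simp only: sum_mult_sum_swap)
  also have "\<dots> = (\<Sum>l\<in>UNIV. \<Sum>i\<in>UNIV. \<Sum>j\<in>UNIV. ?b i * ?b j * (snd z $ l * Chd F i j k l z))"
    by (rule sum.swap)
  also have "\<dots> = (\<Sum>l\<in>UNIV. snd z $ l * (\<Sum>i\<in>UNIV. \<Sum>j\<in>UNIV. ?b i * ?b j * Chd F i j k l z))"
    by (simp add: sum_distrib_left mult_ac)
  also have "\<dots> = 0"
    by (simp add: semi_concurrent_contract2_Chd[OF assms])
  finally show ?thesis .
qed

end

end

theorem mainTheorem5:
  fixes U :: "(real^'n::finite) set" and F :: "'n fn" and B :: "real^'n \<Rightarrow> real^'n"
  assumes "finsler U F"
    and "P_reducible U F"
    and "semi_concurrent U F B"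
    and "z \<in> TU0 U"
    and "Bsq F B z * (F z)\<^sup>2 - (B0 F B z)\<^sup>2 \<noteq> 0"
  shows "(\<forall>k. Pv F k z = 0) \<and> (\<forall>i j k. Pt F i j k z = 0)"
proof -
  let ?b = "\<lambda>i. B (fst z) $ i" and ?N = "real CARD('n) + 1"
  have reduced: "Pt F i j k z
      = (ht F i j z * Pv F k z + ht F j k z * Pv F i z + ht F k i z * Pv F j z) / ?N" for i j k
    using assms(2,4) unfolding P_reducible_def by blast
  have "(F z)\<^sup>2 * (\<Sum>i\<in>UNIV. \<Sum>j\<in>UNIV. ht F i j z * ?b i * ?b j) \<noteq> 0"
    unfolding angular_form_eq[OF assms(1,4)] by (rule assms(5))
  then have angular: "(\<Sum>i\<in>UNIV. \<Sum>j\<in>UNIV. ht F i j z * ?b i * ?b j) \<noteq> 0"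
    by simp
  have contraction: "(\<Sum>i\<in>UNIV. \<Sum>j\<in>UNIV. ?b i * ?b j
      * ((ht F i j z * Pv F k z + ht F j k z * Pv F i z + ht F k i z * Pv F j z) / ?N)) = 0" for k
    using semi_concurrent_contract2_Pt[OF assms(1,3,4), of k] unfolding reduced .
  have "Pv F k z = 0" for k
    by (rule reducible_contraction_eq_0[OF _ angular contraction]) simp
  then show ?thesis
    using reduced by simp
qed

end
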